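(* Let $\mathcal{H}=(V,E)$ be a linear hypergraph without loop with $n$ vertices, and suppose $E=E'\sqcup E''$ where, with $\mathcal{H}'=(V,E')$: $\mathrm{ar}(\mathcal{H}')\ge\sqrt{n}$; $|e|<\sqrt{n}$ for all $e\in E''$; and for every $e\in E''$ there is $x_0\in e$ with $\mathrm{deg}_{\mathcal{H}}(x_0)\le|e|$. Then $\mathrm{q}(\mathcal{H})\le n$.
   Context: A hypergraph $\mathcal{H}=(V,E)$ has a finite vertex set $V$ and a finite set $E$ of nonempty subsets of $V$ (hyperedges); a loop is a hyperedge with one element; linear means distinct hyperedges share at most one vertex. $\mathrm{deg}_{\mathcal{H}}(x)$ is the number of hyperedges containing $x$. The antirank $\mathrm{ar}$ is the minimum cardinality of a hyperedge ($\infty$ if there are none). The chromatic index $\mathrm{q}(\mathcal{H})$ is the least number of colors in a coloring of hyperedges where distinct intersecting hyperedges get different colors. *)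

theory Defs
  imports Complex_Main "HOL-Library.Extended_Real"
begin

definition hypergraph :: "'a set \<Rightarrow> 'a set set \<Rightarrow> bool" where
  "hypergraph V E \<longleftrightarrow> finite V \<and> (\<forall>e\<in>E. e \<noteq> {} \<and> e \<subseteq> V)"

definition linear_hg :: "'a set set \<Rightarrow> bool" where
  "linear_hg E \<longleftrightarrow> (\<forall>e\<in>E. \<forall>f\<in>E. e \<noteq> f \<longrightarrow> card (e \<inter> f) \<le> 1)"

definition loopless :: "'a set set \<Rightarrow> bool" where
  "loopless E \<longleftrightarrow> (\<forall>e\<in>E. card e \<noteq> 1)"

definition hdeg :: "'a set set \<Rightarrow> 'a \<Rightarrow> nat" where
  "hdeg E x = card {e\<in>E. x \<in> e}"

definition antirank :: "'a set set \<Rightarrow> ereal" where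
  "antirank E = (if E = {} then \<infinity> else ereal (real (Min (card ` E))))"

definition proper_edge_colouring :: "'a set set \<Rightarrow> ('a set \<Rightarrow> nat) \<Rightarrow> nat \<Rightarrow> bool" where
  "proper_edge_colouring E c k \<longleftrightarrow>
     (\<forall>e\<in>E. c e < k) \<and> (\<forall>e\<in>E. \<forall>f\<in>E. e \<noteq> f \<and> e \<inter> f \<noteq> {} \<longrightarrow> c e \<noteq> c f)"

definition chromatic_index :: "'a set set \<Rightarrow> nat" where
  "chromatic_index E = (LEAST k. \<exists>c. proper_edge_colouring E c k)"

end

theory Submission
  imports Defs
begin

text \<open>Colouring greedily along a degeneracy order uses at most \<open>n\<close> colours unless some
  subfamily \<open>S\<close> has every edge meeting at least \<open>n\<close> other edges of \<open>S\<close>. Let \<open>e\<close> be a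
  smallest edge of such an \<open>S\<close>, of size \<open>k\<close>. By linearity the edges of \<open>S\<close> through a point
  \<open>x \<in> e\<close> are disjoint outside \<open>x\<close> and have at least \<open>k - 1\<close> points outside \<open>e\<close>, so there
  are at most \<open>(n - k)/(k - 1)\<close> of them. If \<open>e \<in> E''\<close>, a point of degree at most \<open>k\<close>
  pushes the number of neighbours of \<open>e\<close> below \<open>n\<close>; if \<open>e \<in> E'\<close>, then \<open>k\<^sup>2 \<ge> n\<close> and the
  count is below \<open>n\<close> unless \<open>k\<^sup>2 = n\<close>. In that case all estimates are sharp and force
  \<open>(V, E)\<close> to be an affine plane of order \<open>k\<close>, whose \<open>k + 1 \<le> n\<close> parallel classes colour it.\<close>

lemma hypergraph_subset: "hypergraph V E \<Longrightarrow> S \<subseteq> E \<Longrightarrow> hypergraph V S"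
  unfolding hypergraph_def by blast

lemma linear_hg_subset: "linear_hg E \<Longrightarrow> S \<subseteq> E \<Longrightarrow> linear_hg S"
  unfolding linear_hg_def by blast

lemma hypergraph_finite_edge: "hypergraph V E \<Longrightarrow> f \<in> E \<Longrightarrow> finite f"
  unfolding hypergraph_def by (meson finite_subset)

lemma hypergraph_finite: "hypergraph V E \<Longrightarrow> finite E"
  unfolding hypergraph_def by (metis Pow_iff finite_Pow_iff finite_subset subsetI)

lemma loopless_hypergraph_card_ge_2:
  assumes "hypergraph V E" "loopless E" "f \<in> E"
  shows "2 \<le> card f"
proof -
  have "card f \<noteq> 0"
    using assms hypergraph_finite_edge[OF assms(1,3)] unfolding hypergraph_def by auto
  moreover have "card f \<noteq> 1" using assms(2,3) unfolding loopless_def by blast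
  ultimately show ?thesis by linarith
qed

lemma linear_hg_eq_if_two_common:
  assumes "linear_hg E" "f \<in> E" "g \<in> E" "finite f" "a \<noteq> b" "a \<in> f" "b \<in> f" "a \<in> g" "b \<in> g"
  shows "f = g"
proof (rule ccontr)
  assume "f \<noteq> g"
  then have "card (f \<inter> g) \<le> 1" using assms(1-3) unfolding linear_hg_def by blast
  moreover have "card {a, b} \<le> card (f \<inter> g)" using assms(4-9) by (intro card_mono) auto
  ultimately show False using assms(5) by simp
qed

lemma linear_hg_Int_singleton:
  assumes "linear_hg E" "e \<in> E" "f \<in> E" "finite f" "f \<noteq> e" "x \<in> e" "x \<in> f"
  shows "f \<inter> e = {x}"
  using linear_hg_eq_if_two_common[OF assms(1,3,2,4)] assms(5-7) by blast

definition edge_nbhd :: "'a set set \<Rightarrow> 'a set \<Rightarrow> 'a set set" where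
  "edge_nbhd S e = {f\<in>S. f \<noteq> e \<and> f \<inter> e \<noteq> {}}"

definition edge_nbhd_at :: "'a set set \<Rightarrow> 'a set \<Rightarrow> 'a \<Rightarrow> 'a set set" where
  "edge_nbhd_at S e x = {f\<in>S. f \<noteq> e \<and> x \<in> f}"

lemma edge_nbhd_eq_UN: "edge_nbhd S e = (\<Union>x\<in>e. edge_nbhd_at S e x)"
  unfolding edge_nbhd_def edge_nbhd_at_def by auto

lemma card_edge_nbhd_le_sum:
  "finite e \<Longrightarrow> card (edge_nbhd S e) \<le> (\<Sum>x\<in>e. card (edge_nbhd_at S e x))"
  unfolding edge_nbhd_eq_UN by (rule card_UN_le)

text \<open>By linearity the sets \<open>f - e\<close> are pairwise disjoint and \<open>f \<inter> e = {x}\<close>.\<close>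

lemma card_UN_edge_nbhd_at:
  assumes hyp: "hypergraph V S" and lin: "linear_hg S" and "e \<in> S" "x \<in> e"
  shows "card (\<Union>f\<in>edge_nbhd_at S e x. f - e) = (\<Sum>f\<in>edge_nbhd_at S e x. card f - 1)"
proof -
  let ?N = "edge_nbhd_at S e x"
  have N: "f \<in> S" "f \<noteq> e" "x \<in> f" "finite f" if "f \<in> ?N" for f
    using that hypergraph_finite_edge[OF hyp] unfolding edge_nbhd_at_def by auto
  have "finite ?N"
    using hypergraph_finite[OF hyp] unfolding edge_nbhd_at_def by simp
  moreover have "(f - e) \<inter> (g - e) = {}" if "f \<in> ?N" "g \<in> ?N" "f \<noteq> g" for f g
    using linear_hg_Int_singleton[OF lin N(1)[OF that(2)] N(1)[OF that(1)] N(4)[OF that(1)]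
        that(3) N(3)[OF that(2)] N(3)[OF that(1)]] \<open>x \<in> e\<close> by auto
  ultimately have "card (\<Union>f\<in>?N. f - e) = (\<Sum>f\<in>?N. card (f - e))"
    using N(4) by (intro card_UN_disjoint) auto
  also have "\<dots> = (\<Sum>f\<in>?N. card f - 1)"
  proof (rule sum.cong)
    fix f assume "f \<in> ?N"
    then have "f - e = f - {x}"
      using linear_hg_Int_singleton[OF lin \<open>e \<in> S\<close> N(1,4,2)] N(3) \<open>x \<in> e\<close> by blast
    then show "card (f - e) = card f - 1" using N(3,4)[OF \<open>f \<in> ?N\<close>] by simp
  qed simp
  finally show ?thesis .
qed

lemma UN_edge_nbhd_at_subset:
  "hypergraph V S \<Longrightarrow> (\<Union>f\<in>edge_nbhd_at S e x. f - e) \<subseteq> V - e"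
  unfolding hypergraph_def edge_nbhd_at_def by blast

lemma card_Diff_edge: "hypergraph V S \<Longrightarrow> e \<in> S \<Longrightarrow> card (V - e) = card V - card e"
  unfolding hypergraph_def by (meson card_Diff_subset finite_subset)

lemma sum_card_edge_nbhd_at_le:
  assumes hyp: "hypergraph V S" and "linear_hg S" "e \<in> S" "x \<in> e"
  shows "(\<Sum>f\<in>edge_nbhd_at S e x. card f - 1) \<le> card V - card e"
proof -
  have "card (\<Union>f\<in>edge_nbhd_at S e x. f - e) \<le> card (V - e)"
    using UN_edge_nbhd_at_subset[OF hyp] hyp by (intro card_mono) (auto simp: hypergraph_def)
  then show ?thesis
    using card_UN_edge_nbhd_at[OF assms] card_Diff_edge[OF hyp \<open>e \<in> S\<close>] by simp
qed

lemma card_edge_nbhd_at_le: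
  assumes "hypergraph V S" "linear_hg S" "e \<in> S" "x \<in> e" and min: "\<forall>f\<in>S. m \<le> card f"
  shows "(m - 1) * card (edge_nbhd_at S e x) \<le> card V - card e"
proof -
  have "(m - 1) * card (edge_nbhd_at S e x) = (\<Sum>f\<in>edge_nbhd_at S e x. m - 1)"
    by simp
  also have "\<dots> \<le> (\<Sum>f\<in>edge_nbhd_at S e x. card f - 1)"
    using min by (intro sum_mono diff_le_mono) (auto simp: edge_nbhd_at_def)
  also have "\<dots> \<le> card V - card e"
    by (rule sum_card_edge_nbhd_at_le[OF assms(1-4)])
  finally show ?thesis .
qed

lemma sum_card_edge_nbhd_at_le_min_edge:
  assumes "hypergraph V S" "linear_hg S" "e \<in> S" "\<forall>f\<in>S. card e \<le> card f" "A \<subseteq> e"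
  shows "(card e - 1) * (\<Sum>x\<in>A. card (edge_nbhd_at S e x)) \<le> card A * (card V - card e)"
proof -
  have "(card e - 1) * (\<Sum>x\<in>A. card (edge_nbhd_at S e x))
      = (\<Sum>x\<in>A. (card e - 1) * card (edge_nbhd_at S e x))"
    by (simp add: sum_distrib_left)
  also have "\<dots> \<le> (\<Sum>x\<in>A. card V - card e)"
    using card_edge_nbhd_at_le[OF assms(1-3)] assms(4,5) by (intro sum_mono) blast
  finally show ?thesis by simp
qed

lemma card_edge_nbhd_less_if_low_degree:
  assumes hyp: "hypergraph V E" and lin: "linear_hg E" and "S \<subseteq> E" "e \<in> S"
    and min: "\<forall>f\<in>S. card e \<le> card f" and k2: "2 \<le> card e"
    and "x0 \<in> e" and deg: "hdeg E x0 \<le> card e"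
  shows "card (edge_nbhd S e) < card V"
proof -
  define k where "k = card e"
  have hypS: "hypergraph V S" and linS: "linear_hg S"
    using hypergraph_subset[OF hyp] linear_hg_subset[OF lin] \<open>S \<subseteq> E\<close> by auto
  have "e \<in> E" using \<open>S \<subseteq> E\<close> \<open>e \<in> S\<close> by blast
  have fin_e: "finite e" by (rule hypergraph_finite_edge[OF hyp \<open>e \<in> E\<close>])
  have "card (edge_nbhd_at S e x0) \<le> card ({f\<in>E. x0 \<in> f} - {e})"
    using hypergraph_finite[OF hyp] \<open>S \<subseteq> E\<close>
    by (intro card_mono) (auto simp: edge_nbhd_at_def)
  also have "\<dots> = hdeg E x0 - 1"
    using hypergraph_finite[OF hyp] \<open>e \<in> E\<close> \<open>x0 \<in> e\<close> by (simp add: hdeg_def)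
  finally have at_x0: "card (edge_nbhd_at S e x0) \<le> k - 1"
    using deg k_def by linarith
  have "(k - 1) * (\<Sum>x\<in>e - {x0}. card (edge_nbhd_at S e x)) \<le> (k - 1) * (card V - k)"
    using sum_card_edge_nbhd_at_le_min_edge[OF hypS linS \<open>e \<in> S\<close> min, of "e - {x0}"]
      fin_e \<open>x0 \<in> e\<close> k_def by simp
  then have elsewhere: "(\<Sum>x\<in>e - {x0}. card (edge_nbhd_at S e x)) \<le> card V - k"
    using k2 k_def by simp
  have "card e \<le> card V"
    using hyp \<open>e \<in> E\<close> by (intro card_mono) (auto simp: hypergraph_def)
  have "card (edge_nbhd S e) \<le> (\<Sum>x\<in>e. card (edge_nbhd_at S e x))"
    by (rule card_edge_nbhd_le_sum[OF fin_e])
  also have "\<dots> = card (edge_nbhd_at S e x0) + (\<Sum>x\<in>e - {x0}. card (edge_nbhd_at S e x))"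
    by (rule sum.remove[OF fin_e \<open>x0 \<in> e\<close>])
  also have "\<dots> < card V"
    using at_x0 elsewhere \<open>card e \<le> card V\<close> k2 k_def by linarith
  finally show ?thesis .
qed

text \<open>For a smallest edge of size \<open>k\<close>, each of its points sees at most \<open>(|V| - k)/(k - 1)\<close>
  neighbours, and \<open>k (|V| - k) < (k - 1) |V|\<close> exactly when \<open>|V| < k\<^sup>2\<close>.\<close>

lemma card_edge_nbhd_less_if_large_edges:
  assumes hyp: "hypergraph V S" and "linear_hg S" "e \<in> S"
    and min: "\<forall>f\<in>S. card e \<le> card f" and k2: "2 \<le> card e"
    and large: "card V < card e * card e"
  shows "card (edge_nbhd S e) < card V"
proof -
  define k where "k = card e"
  define n where "n = card V"
  have fin_e: "finite e" by (rule hypergraph_finite_edge[OF hyp \<open>e \<in> S\<close>])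
  have "k \<le> n"
    using hyp \<open>e \<in> S\<close> unfolding k_def n_def by (intro card_mono) (auto simp: hypergraph_def)
  have "(k - 1) * (\<Sum>x\<in>e. card (edge_nbhd_at S e x)) \<le> k * (n - k)"
    using sum_card_edge_nbhd_at_le_min_edge[OF assms(1-4) order_refl] k_def n_def by simp
  also have "\<dots> < (k - 1) * n"
  proof -
    have "k * (n - k) + k * k = k * n" using \<open>k \<le> n\<close> by (simp add: diff_mult_distrib2)
    moreover have "(k - 1) * n + n = k * n" using k2 k_def by (simp add: diff_mult_distrib)
    moreover have "n < k * k" using large k_def n_def by simp
    ultimately show ?thesis by linarith
  qed
  finally have "(\<Sum>x\<in>e. card (edge_nbhd_at S e x)) < n" by simp
  then show ?thesis using card_edge_nbhd_le_sum[OF fin_e, of S] n_def by linarith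
qed

lemma eq_if_sum_le_card_mult:
  fixes g :: "'b \<Rightarrow> nat"
  assumes "finite A" "\<forall>i\<in>A. b \<le> g i" "sum g A \<le> card A * b" "i \<in> A"
  shows "g i = b"
proof (rule ccontr)
  assume "g i \<noteq> b"
  with assms(2,4) have "b < g i" by (metis le_neq_implies_less)
  with assms(2,4) have "(\<Sum>j\<in>A. b) < sum g A"
    using sum_strict_mono_ex1[OF assms(1), of "\<lambda>_. b" g] by blast
  with assms(3) show False by simp
qed

text \<open>The equality case \<open>|V| = k\<^sup>2\<close>: if a smallest edge \<open>e\<close> still has \<open>|V|\<close> neighbours, all
  bounds above are sharp, so through each point \<open>x\<close> of \<open>e\<close> pass exactly \<open>k\<close> further edges,
  all of size \<open>k\<close>, and together they cover \<open>V - e\<close>.\<close>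

lemma card_edge_nbhd_at_ge_if_card_nbhd_sq:
  assumes hyp: "hypergraph V S" and lin: "linear_hg S" and "e \<in> S"
    and min: "\<forall>f\<in>S. card e \<le> card f" and k2: "2 \<le> card e"
    and sq: "card V = card e * card e" and many: "card V \<le> card (edge_nbhd S e)" and "x \<in> e"
  shows "card e \<le> card (edge_nbhd_at S e x)"
proof -
  define k where "k = card e"
  have fin_e: "finite e" by (rule hypergraph_finite_edge[OF hyp \<open>e \<in> S\<close>])
  have "(k - 1) * (\<Sum>z\<in>e - {x}. card (edge_nbhd_at S e z)) \<le> (k - 1) * (k * k - k)"
    using sum_card_edge_nbhd_at_le_min_edge[OF hyp lin \<open>e \<in> S\<close> min, of "e - {x}"]
      fin_e \<open>x \<in> e\<close> sq k_def by simp
  then have elsewhere: "(\<Sum>z\<in>e - {x}. card (edge_nbhd_at S e z)) \<le> k * k - k"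
    using k2 k_def by simp
  have "k * k \<le> (\<Sum>z\<in>e. card (edge_nbhd_at S e z))"
    using many card_edge_nbhd_le_sum[OF fin_e, of S] sq unfolding k_def by linarith
  also have "\<dots> = card (edge_nbhd_at S e x) + (\<Sum>z\<in>e - {x}. card (edge_nbhd_at S e z))"
    by (rule sum.remove[OF fin_e \<open>x \<in> e\<close>])
  finally show ?thesis using elsewhere le_square[of k] k_def by linarith
qed

lemma min_edge_point_joins_all:
  assumes hyp: "hypergraph V S" and lin: "linear_hg S" and "e \<in> S"
    and min: "\<forall>f\<in>S. card e \<le> card f" and k2: "2 \<le> card e"
    and sq: "card V = card e * card e" and many: "card V \<le> card (edge_nbhd S e)" and "x \<in> e"
  shows "\<forall>y\<in>V. \<exists>f\<in>S. x \<in> f \<and> y \<in> f" and "\<forall>f\<in>S. x \<in> f \<longrightarrow> card f = card e"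
proof -
  define k where "k = card e"
  define N where "N = edge_nbhd_at S e x"
  have finN: "finite N"
    using hypergraph_finite[OF hyp] unfolding N_def edge_nbhd_at_def by simp
  have kk: "k * k - k = k * (k - 1)" by (simp add: diff_mult_distrib2)
  have lower: "\<forall>f\<in>N. k - 1 \<le> card f - 1"
    using min k_def unfolding N_def edge_nbhd_at_def by auto
  have upper: "(\<Sum>f\<in>N. card f - 1) \<le> k * (k - 1)"
    using sum_card_edge_nbhd_at_le[OF hyp lin \<open>e \<in> S\<close> \<open>x \<in> e\<close>] sq kk k_def N_def by simp
  have "card N * (k - 1) \<le> (\<Sum>f\<in>N. card f - 1)"
    using sum_mono[of N "\<lambda>_. k - 1"] lower by simp
  then have "card N * (k - 1) \<le> k * (k - 1)" using upper by linarith
  then have "card N = k"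
    using card_edge_nbhd_at_ge_if_card_nbhd_sq[OF assms] k2 k_def N_def by simp
  then have card_N: "card f = k" if "f \<in> N" for f
    using eq_if_sum_le_card_mult[OF finN lower _ that] upper lower that k2 k_def by fastforce
  have "card (\<Union>f\<in>N. f - e) = card (V - e)"
    using card_UN_edge_nbhd_at[OF hyp lin \<open>e \<in> S\<close> \<open>x \<in> e\<close>] card_N
      card_Diff_edge[OF hyp \<open>e \<in> S\<close>] \<open>card N = k\<close> sq kk k_def N_def by simp
  then have cover: "(\<Union>f\<in>N. f - e) = V - e"
    using UN_edge_nbhd_at_subset[OF hyp] hyp unfolding N_def
    by (intro card_subset_eq) (auto simp: hypergraph_def)
  show "\<forall>y\<in>V. \<exists>f\<in>S. x \<in> f \<and> y \<in> f"
    using cover \<open>e \<in> S\<close> \<open>x \<in> e\<close> unfolding N_def edge_nbhd_at_def by blast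
  show "\<forall>f\<in>S. x \<in> f \<longrightarrow> card f = card e"
    using card_N k_def unfolding N_def edge_nbhd_at_def by blast
qed

locale affine_plane =
  fixes V :: "'a set" and L :: "'a set set" and k :: nat
  assumes hypergraph: "hypergraph V L" and linear: "linear_hg L"
    and order_ge_2: "2 \<le> k" and card_points: "card V = k * k"
    and card_line: "l \<in> L \<Longrightarrow> card l = k"
    and joining: "x \<in> V \<Longrightarrow> y \<in> V \<Longrightarrow> \<exists>l\<in>L. x \<in> l \<and> y \<in> l"
begin

lemma line_subset: "l \<in> L \<Longrightarrow> l \<subseteq> V"
  using hypergraph unfolding hypergraph_def by blast

lemma line_unique:
  "l \<in> L \<Longrightarrow> m \<in> L \<Longrightarrow> x \<noteq> y \<Longrightarrow> x \<in> l \<Longrightarrow> y \<in> l \<Longrightarrow> x \<in> m \<Longrightarrow> y \<in> m \<Longrightarrow> l = m"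
  using linear_hg_eq_if_two_common[OF linear _ _ hypergraph_finite_edge[OF hypergraph]] by blast

lemma card_lines_through:
  assumes "x \<in> V"
  shows "card {l\<in>L. x \<in> l} = k + 1"
proof -
  define D where "D = {l\<in>L. x \<in> l}"
  have finD: "finite D" using hypergraph_finite[OF hypergraph] unfolding D_def by simp
  have D: "l \<in> L" "x \<in> l" "finite l" if "l \<in> D" for l
    using that hypergraph_finite_edge[OF hypergraph] unfolding D_def by auto
  have "V - {x} \<subseteq> (\<Union>l\<in>D. l - {x})"
  proof
    fix y assume "y \<in> V - {x}"
    then obtain l where "l \<in> L" "x \<in> l" "y \<in> l" using joining[OF assms] by blast
    with \<open>y \<in> V - {x}\<close> show "y \<in> (\<Union>l\<in>D. l - {x})" unfolding D_def by blast
  qed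
  moreover have "(\<Union>l\<in>D. l - {x}) \<subseteq> V - {x}" using line_subset D(1) by blast
  ultimately have cover: "(\<Union>l\<in>D. l - {x}) = V - {x}" by (rule equalityI[rotated])
  have "\<forall>l\<in>D. \<forall>m\<in>D. l \<noteq> m \<longrightarrow> (l - {x}) \<inter> (m - {x}) = {}"
  proof (intro ballI impI)
    fix l m assume "l \<in> D" "m \<in> D" "l \<noteq> m"
    show "(l - {x}) \<inter> (m - {x}) = {}"
    proof (rule ccontr)
      assume "(l - {x}) \<inter> (m - {x}) \<noteq> {}"
      then obtain z where "z \<in> l" "z \<in> m" "x \<noteq> z" by blast
      then have "l = m" using line_unique[OF D(1)[OF \<open>l \<in> D\<close>] D(1)[OF \<open>m \<in> D\<close>] \<open>x \<noteq> z\<close>]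
          D(2) \<open>l \<in> D\<close> \<open>m \<in> D\<close> by blast
      with \<open>l \<noteq> m\<close> show False ..
    qed
  qed
  then have "card (\<Union>l\<in>D. l - {x}) = (\<Sum>l\<in>D. card (l - {x}))"
    using D(3) finD by (intro card_UN_disjoint) auto
  also have "\<dots> = (\<Sum>l\<in>D. k - 1)"
    using D card_line by (intro sum.cong) auto
  finally have "card D * (k - 1) = k * k - 1"
    using cover assms card_points hypergraph by (simp add: hypergraph_def)
  also have "\<dots> = (k + 1) * (k - 1)" by (cases k) (simp_all add: algebra_simps)
  finally have "card D * (k - 1) = (k + 1) * (k - 1)" .
  moreover have "k - 1 \<noteq> 0" using order_ge_2 by simp
  ultimately show ?thesis unfolding D_def by (metis mult_right_cancel)
qed

text \<open>For \<open>y \<notin> h\<close>, the lines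
  through \<open>y\<close> meeting \<open>h\<close> correspond to the \<open>k\<close> points of \<open>h\<close>, which leaves exactly one of
  the \<open>k + 1\<close> lines through \<open>y\<close>.\<close>

lemma ex1_parallel_through:
  assumes "h \<in> L" "y \<in> V"
  shows "\<exists>!l. l \<in> L \<and> y \<in> l \<and> (l = h \<or> l \<inter> h = {})"
proof (cases "y \<in> h")
  case True
  then show ?thesis using \<open>h \<in> L\<close> by blast
next
  case False
  define D where "D = {l\<in>L. y \<in> l}"
  define through where "through z = (SOME l. l \<in> L \<and> y \<in> l \<and> z \<in> l)" for z
  have through: "through z \<in> L" "y \<in> through z" "z \<in> through z" if "z \<in> h" for z
  proof -
    have "\<exists>l. l \<in> L \<and> y \<in> l \<and> z \<in> l"
      using joining[OF \<open>y \<in> V\<close>] line_subset[OF \<open>h \<in> L\<close>] that by blast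
    then show "through z \<in> L" "y \<in> through z" "z \<in> through z"
      unfolding through_def by (metis (no_types, lifting) someI_ex)+
  qed
  have "inj_on through h"
  proof (rule inj_onI, rule ccontr)
    fix z z' assume "z \<in> h" "z' \<in> h" "through z = through z'" "z \<noteq> z'"
    then have "through z = h"
      using line_unique[OF through(1) \<open>h \<in> L\<close>] through by metis
    then show False using through(2) \<open>z \<in> h\<close> \<open>y \<notin> h\<close> by metis
  qed
  moreover have "through ` h = {l\<in>D. l \<inter> h \<noteq> {}}"
  proof
    show "through ` h \<subseteq> {l\<in>D. l \<inter> h \<noteq> {}}" using through unfolding D_def by blast
    show "{l\<in>D. l \<inter> h \<noteq> {}} \<subseteq> through ` h"
    proof
      fix l assume "l \<in> {l\<in>D. l \<inter> h \<noteq> {}}"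
      then obtain z where "l \<in> L" "y \<in> l" "z \<in> l" "z \<in> h" unfolding D_def by blast
      then have "l = through z"
        using line_unique[OF _ through(1)] through \<open>y \<notin> h\<close> by metis
      then show "l \<in> through ` h" using \<open>z \<in> h\<close> by blast
    qed
  qed
  ultimately have "card {l\<in>D. l \<inter> h \<noteq> {}} = k"
    using card_image card_line[OF \<open>h \<in> L\<close>] by metis
  moreover have "card D = k + 1" unfolding D_def by (rule card_lines_through[OF \<open>y \<in> V\<close>])
  moreover have "finite D" using hypergraph_finite[OF hypergraph] unfolding D_def by simp
  ultimately have "card (D - {l\<in>D. l \<inter> h \<noteq> {}}) = 1"
    by (subst card_Diff_subset) auto
  moreover have "D - {l\<in>D. l \<inter> h \<noteq> {}} = {l\<in>D. l \<inter> h = {}}" by blast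
  ultimately have "card {l\<in>D. l \<inter> h = {}} = 1" by simp
  then obtain g where "{l\<in>D. l \<inter> h = {}} = {g}" by (rule card_1_singletonE)
  then show ?thesis
    using \<open>y \<notin> h\<close> unfolding D_def by (intro ex1I[of _ g]) blast+
qed

text \<open>Colour each line by the line through a fixed point \<open>p\<close> parallel to it.\<close>

lemma proper_edge_colouring_parallel_classes: "\<exists>c. proper_edge_colouring L c (k + 1)"
proof -
  have "V \<noteq> {}" using card_points order_ge_2 by auto
  then obtain p where "p \<in> V" by blast
  define D where "D = {l\<in>L. p \<in> l}"
  have "finite D" using hypergraph_finite[OF hypergraph] unfolding D_def by simp
  then obtain b where "bij_betw b D {0..<card D}" using ex_bij_betw_finite_nat by blast
  then have b: "inj_on b D" "b ` D = {0..<k + 1}"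
    using card_lines_through[OF \<open>p \<in> V\<close>] unfolding D_def bij_betw_def by simp_all
  define par where "par e = (THE l. l \<in> L \<and> p \<in> l \<and> (l = e \<or> l \<inter> e = {}))" for e
  have par: "par e \<in> L" "p \<in> par e" "par e = e \<or> par e \<inter> e = {}" if "e \<in> L" for e
    using theI'[OF ex1_parallel_through[OF that \<open>p \<in> V\<close>]] unfolding par_def by blast+
  have "proper_edge_colouring L (b \<circ> par) (k + 1)"
    unfolding proper_edge_colouring_def
  proof (intro conjI ballI impI)
    fix e assume "e \<in> L"
    then have "par e \<in> D" using par unfolding D_def by blast
    then show "(b \<circ> par) e < k + 1" using b(2) by auto
  next
    fix e f assume "e \<in> L" "f \<in> L" and ef: "e \<noteq> f \<and> e \<inter> f \<noteq> {}"
    show "(b \<circ> par) e \<noteq> (b \<circ> par) f"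
    proof
      assume "(b \<circ> par) e = (b \<circ> par) f"
      moreover have "par e \<in> D" "par f \<in> D" using par \<open>e \<in> L\<close> \<open>f \<in> L\<close> unfolding D_def by blast+
      ultimately have "par e = par f" using b(1) by (simp add: inj_on_eq_iff)
      then obtain g where "par e = g" "par f = g" by blast
      then have g: "g \<in> L" "e = g \<or> e \<inter> g = {}" "f = g \<or> f \<inter> g = {}"
        using par(1,3) \<open>e \<in> L\<close> \<open>f \<in> L\<close> by (metis Int_commute)+
      obtain y where "y \<in> e" "y \<in> f" using ef by blast
      then have "y \<in> V" using line_subset \<open>e \<in> L\<close> by blast
      from ex1_parallel_through[OF g(1) this] have "e = f"
        using g(2,3) \<open>e \<in> L\<close> \<open>f \<in> L\<close> \<open>y \<in> e\<close> \<open>y \<in> f\<close> by blast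
      then show False using ef by blast
    qed
  qed
  then show ?thesis by blast
qed

end

lemma affine_plane_if_card_nbhd_sq:
  assumes hyp: "hypergraph V S" and lin: "linear_hg S" and "e \<in> S"
    and min: "\<forall>f\<in>S. card e \<le> card f" and k2: "2 \<le> card e"
    and sq: "card V = card e * card e" and dense: "\<forall>f\<in>S. card V \<le> card (edge_nbhd S f)"
  shows "affine_plane V S (card e)"
proof -
  have through_min_edge: "(\<forall>z\<in>V. \<exists>g\<in>S. y \<in> g \<and> z \<in> g) \<and> (\<forall>g\<in>S. y \<in> g \<longrightarrow> card g = card e)"
    if "f \<in> S" "card f = card e" "y \<in> f" for f y
  proof -
    have "\<forall>g\<in>S. card f \<le> card g" "2 \<le> card f" "card V = card f * card f"
      "card V \<le> card (edge_nbhd S f)"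
      using that min k2 sq dense by simp_all
    from min_edge_point_joins_all[OF hyp lin \<open>f \<in> S\<close> this \<open>y \<in> f\<close>]
    show ?thesis using \<open>card f = card e\<close> by simp
  qed
  have "e \<noteq> {}" using k2 by auto
  then obtain x where "x \<in> e" by blast
  have all_points: "(\<forall>z\<in>V. \<exists>g\<in>S. y \<in> g \<and> z \<in> g) \<and> (\<forall>g\<in>S. y \<in> g \<longrightarrow> card g = card e)"
    if "y \<in> V" for y
  proof -
    obtain g where "g \<in> S" "x \<in> g" "y \<in> g" "card g = card e"
      using through_min_edge[OF \<open>e \<in> S\<close> refl \<open>x \<in> e\<close>] \<open>y \<in> V\<close> by blast
    then show ?thesis using through_min_edge by blast
  qed
  show ?thesis
  proof (rule affine_plane.intro)
    fix l assume "l \<in> S"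
    then obtain y where "y \<in> l" "y \<in> V" using hyp unfolding hypergraph_def by blast
    then show "card l = card e" using all_points \<open>l \<in> S\<close> by blast
  next
    fix x y assume "x \<in> V" "y \<in> V"
    then show "\<exists>l\<in>S. x \<in> l \<and> y \<in> l" using all_points by blast
  qed fact+
qed

lemma joining_subfamily_eq:
  assumes hyp: "hypergraph V E" and lin: "linear_hg E" and two: "\<forall>g\<in>E. 2 \<le> card g"
    and "S \<subseteq> E" and joins: "\<forall>x\<in>V. \<forall>y\<in>V. \<exists>f\<in>S. x \<in> f \<and> y \<in> f"
  shows "S = E"
proof
  show "E \<subseteq> S"
  proof
    fix g assume "g \<in> E"
    have "finite g" by (rule hypergraph_finite_edge[OF hyp \<open>g \<in> E\<close>])
    moreover have "\<not> card g \<le> Suc 0" using two \<open>g \<in> E\<close> by fastforce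
    ultimately obtain a b where "a \<in> g" "b \<in> g" "a \<noteq> b"
      using card_le_Suc0_iff_eq by blast
    moreover have "g \<subseteq> V" using hyp \<open>g \<in> E\<close> unfolding hypergraph_def by blast
    ultimately obtain f where "f \<in> S" "a \<in> f" "b \<in> f" using joins by blast
    then have "f = g"
      using linear_hg_eq_if_two_common[OF lin _ \<open>g \<in> E\<close> hypergraph_finite_edge[OF hyp]]
        \<open>S \<subseteq> E\<close> \<open>a \<in> g\<close> \<open>b \<in> g\<close> \<open>a \<noteq> b\<close> by blast
    then show "g \<in> S" using \<open>f \<in> S\<close> by blast
  qed
qed fact

lemma proper_edge_colouring_update:
  assumes c: "proper_edge_colouring (S - {e}) c n" and "i < n" and free: "i \<notin> c ` edge_nbhd S e"
  shows "proper_edge_colouring S (c(e := i)) n"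
  unfolding proper_edge_colouring_def
proof (intro conjI ballI impI)
  fix f assume "f \<in> S"
  then show "(c(e := i)) f < n"
    using c \<open>i < n\<close> unfolding proper_edge_colouring_def by (cases "f = e") auto
next
  have avoid: "c h \<noteq> i" if "h \<in> S" "h \<noteq> e" "h \<inter> e \<noteq> {}" for h
    using free that unfolding edge_nbhd_def by blast
  fix f g assume "f \<in> S" "g \<in> S" and fg: "f \<noteq> g \<and> f \<inter> g \<noteq> {}"
  consider "f = e" | "g = e" | "f \<noteq> e" "g \<noteq> e" by blast
  then show "(c(e := i)) f \<noteq> (c(e := i)) g"
  proof cases
    case 1
    then have "c g \<noteq> i" using avoid[OF \<open>g \<in> S\<close>] fg by blast
    with 1 fg show ?thesis by auto
  next
    case 2
    then have "c f \<noteq> i" using avoid[OF \<open>f \<in> S\<close>] fg by blast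
    with 2 fg show ?thesis by auto
  next
    case 3
    then have "c f \<noteq> c g"
      using c \<open>f \<in> S\<close> \<open>g \<in> S\<close> fg unfolding proper_edge_colouring_def by blast
    with 3 show ?thesis by simp
  qed
qed

lemma ex_less_notin: "finite (A :: nat set) \<Longrightarrow> card A < n \<Longrightarrow> \<exists>i<n. i \<notin> A"
proof (rule ccontr)
  assume "finite A" "card A < n" "\<not> (\<exists>i<n. i \<notin> A)"
  then have "card {..<n} \<le> card A" by (intro card_mono) auto
  with \<open>card A < n\<close> show False by simp
qed

lemma proper_edge_colouring_if_degenerate:
  assumes "finite S" and "\<forall>T\<subseteq>S. T \<noteq> {} \<longrightarrow> (\<exists>e\<in>T. card (edge_nbhd T e) < n)"
  shows "\<exists>c. proper_edge_colouring S c n"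
  using assms
proof (induction S rule: finite_psubset_induct)
  case (psubset S)
  show ?case
  proof (cases "S = {}")
    case True
    then show ?thesis by (auto simp: proper_edge_colouring_def)
  next
    case False
    then obtain e where "e \<in> S" and few: "card (edge_nbhd S e) < n"
      using psubset.prems by blast
    have "S - {e} \<subset> S" using \<open>e \<in> S\<close> by blast
    moreover have "\<forall>T\<subseteq>S - {e}. T \<noteq> {} \<longrightarrow> (\<exists>e\<in>T. card (edge_nbhd T e) < n)"
      using psubset.prems by (meson Diff_subset subset_trans)
    ultimately have "\<exists>c. proper_edge_colouring (S - {e}) c n" by (rule psubset.IH)
    then obtain c where c: "proper_edge_colouring (S - {e}) c n" ..
    have "finite (edge_nbhd S e)" using psubset.hyps unfolding edge_nbhd_def by simp
    moreover have "card (c ` edge_nbhd S e) < n"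
      using card_image_le[OF \<open>finite (edge_nbhd S e)\<close>] few by (rule le_less_trans)
    ultimately obtain i where "i < n" "i \<notin> c ` edge_nbhd S e"
      using ex_less_notin[OF finite_imageI] by blast
    from proper_edge_colouring_update[OF c this] show ?thesis by blast
  qed
qed

lemma chromatic_index_le: "proper_edge_colouring E c k \<Longrightarrow> chromatic_index E \<le> k"
  unfolding chromatic_index_def by (rule Least_le) blast

lemma le_card_sq_if_sqrt_le_antirank:
  assumes "finite E" "e \<in> E" "ereal (sqrt (real n)) \<le> antirank E"
  shows "n \<le> card e * card e"
proof -
  have "antirank E \<le> ereal (real (card e))"
    using assms(1,2) unfolding antirank_def by auto
  then have "ereal (sqrt (real n)) \<le> ereal (real (card e))" using assms(3) by order
  then have "sqrt (real n) \<le> real (card e)" by simp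
  then have "real n \<le> (real (card e))\<^sup>2" by (rule sqrt_le_D)
  then have "real n \<le> real (card e * card e)" by (simp only: of_nat_mult power2_eq_square)
  then show ?thesis by (simp only: of_nat_le_iff)
qed

theorem corollary5p7:
  fixes V :: "'a set" and E E' E'' :: "'a set set" and n :: nat
  assumes "hypergraph V E"
    and "linear_hg E"
    and "loopless E"
    and "n = card V"
    and "E = E' \<union> E''" and "E' \<inter> E'' = {}"
    and "antirank E' \<ge> ereal (sqrt (real n))"
    and "\<forall>e\<in>E''. real (card e) < sqrt (real n)"
    and "\<forall>e\<in>E''. \<exists>x0\<in>e. hdeg E x0 \<le> card e"
  shows "chromatic_index E \<le> n"
proof (cases "\<forall>S\<subseteq>E. S \<noteq> {} \<longrightarrow> (\<exists>e\<in>S. card (edge_nbhd S e) < n)")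
  case True
  then obtain c where "proper_edge_colouring E c n"
    using proper_edge_colouring_if_degenerate[OF hypergraph_finite[OF assms(1)]] by blast
  then show ?thesis by (rule chromatic_index_le)
next
  case False
  then obtain S where "S \<subseteq> E" "S \<noteq> {}" and dense: "\<forall>f\<in>S. card V \<le> card (edge_nbhd S f)"
    using assms(4) by (auto simp: not_less)
  have hyp: "hypergraph V S" and lin: "linear_hg S"
    using hypergraph_subset[OF assms(1) \<open>S \<subseteq> E\<close>] linear_hg_subset[OF assms(2) \<open>S \<subseteq> E\<close>] .
  obtain e where "e \<in> S" and min: "\<forall>f\<in>S. card e \<le> card f"
    using arg_min_if_finite[OF hypergraph_finite[OF hyp] \<open>S \<noteq> {}\<close>, of card] by (meson not_less)
  have two: "\<forall>f\<in>E. 2 \<le> card f" using loopless_hypergraph_card_ge_2[OF assms(1,3)] by blast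
  then have k2: "2 \<le> card e" using \<open>e \<in> S\<close> \<open>S \<subseteq> E\<close> by blast
  have "e \<notin> E''"
  proof
    assume "e \<in> E''"
    then obtain x0 where "x0 \<in> e" "hdeg E x0 \<le> card e" using assms(9) by blast
    from card_edge_nbhd_less_if_low_degree[OF assms(1,2) \<open>S \<subseteq> E\<close> \<open>e \<in> S\<close> min k2 this]
    show False using dense \<open>e \<in> S\<close> by (meson not_less)
  qed
  then have "e \<in> E'" using assms(5) \<open>e \<in> S\<close> \<open>S \<subseteq> E\<close> by blast
  moreover have "finite E'" using hypergraph_finite[OF assms(1)] assms(5) by simp
  ultimately have "card V \<le> card e * card e"
    using le_card_sq_if_sqrt_le_antirank assms(4,7) by blast
  moreover have "\<not> card V < card e * card e"
    using card_edge_nbhd_less_if_large_edges[OF hyp lin \<open>e \<in> S\<close> min k2] dense \<open>e \<in> S\<close>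
    by (meson not_less)
  ultimately have sq: "card V = card e * card e" by simp
  interpret affine_plane V S "card e"
    by (rule affine_plane_if_card_nbhd_sq[OF hyp lin \<open>e \<in> S\<close> min k2 sq dense])
  have "S = E" using joining_subfamily_eq[OF assms(1,2) two \<open>S \<subseteq> E\<close>] joining by blast
  then obtain c where "proper_edge_colouring E c (card e + 1)"
    using proper_edge_colouring_parallel_classes by blast
  then have "chromatic_index E \<le> card e + 1" by (rule chromatic_index_le)
  also have "\<dots> \<le> n" using mult_le_mono1[OF k2, of "card e"] k2 sq assms(4) by linarith
  finally show ?thesis .
qed
end
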